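(* For every integer $d \geq 2$, $\mathsf {Brac}_{d,1}=\mathsf {Brac}_d$.
   Context: $\Delta_d=\{\alpha\in\mathbb R^d:\alpha_i\ge0,\ \sum_i\alpha_i=1\}$. The bracelet condition set is $\mathsf{Brac}_d=\{(\alpha,\beta)\in\Delta_d^2:\ \forall i\in[d],\ \sqrt{\alpha_i\beta_i}\le\sum_{j\ne i}\sqrt{\alpha_j\beta_j}\}$. For $s\ge1$, the generalized bracelet condition set $\mathsf{Brac}_{d,s}$ is the set of $(\alpha,\beta)\in\Delta_d^2$ for which there exist $A_1,\dots,A_d,B_1,\dots,B_d\in M_s(\mathbb C)$ with $\sum_i A_iA_i^*=\sum_iB_iB_i^*=I_s$, $\sum_iA_iB_i^*=0$, and $\tfrac1s\|A_i\|_F^2=\alpha_i$, $\tfrac1s\|B_i\|_F^2=\beta_i$ for all $i\in[d]$, where $\|X\|_F=\operatorname{Tr}(XX^* )^{1/2}$. *)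

theory Defs
  imports Complex_Main
begin

text \<open>Vectors in R^d are real lists of length d (entry i is the (i+1)-th coordinate).
  Matrices in M_s(C) are functions nat \<Rightarrow> nat \<Rightarrow> complex, only entries with
  indices < s being relevant. A family A_1..A_d of matrices is a function
  nat \<Rightarrow> (nat \<Rightarrow> nat \<Rightarrow> complex), indexed by i < d.\<close>

definition simplex :: "nat \<Rightarrow> real list set" where
  "simplex d = {a. length a = d \<and> (\<forall>i<d. a ! i \<ge> 0) \<and> (\<Sum>i<d. a ! i) = 1}"

definition Brac :: "nat \<Rightarrow> (real list \<times> real list) set" where
  "Brac d = {(a, b). a \<in> simplex d \<and> b \<in> simplex d \<and>
     (\<forall>i<d. sqrt (a ! i * b ! i) \<le> (\<Sum>j\<in>{..<d} - {i}. sqrt (a ! j * b ! j)))}"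

text \<open>Entry (j,k) of \<Sum>_i X_i Y_i^* for s\<times>s matrices.\<close>
definition sum_mult_adj :: "nat \<Rightarrow> nat \<Rightarrow> (nat \<Rightarrow> nat \<Rightarrow> nat \<Rightarrow> complex)
    \<Rightarrow> (nat \<Rightarrow> nat \<Rightarrow> nat \<Rightarrow> complex) \<Rightarrow> nat \<Rightarrow> nat \<Rightarrow> complex" where
  "sum_mult_adj d s X Y j k = (\<Sum>i<d. \<Sum>l<s. X i j l * cnj (Y i k l))"

definition frob2 :: "nat \<Rightarrow> (nat \<Rightarrow> nat \<Rightarrow> complex) \<Rightarrow> real" where
  "frob2 s X = (\<Sum>j<s. \<Sum>k<s. (cmod (X j k))\<^sup>2)"

definition Brac_gen :: "nat \<Rightarrow> nat \<Rightarrow> (real list \<times> real list) set" where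
  "Brac_gen d s = {(a, b). a \<in> simplex d \<and> b \<in> simplex d \<and>
     (\<exists>A B :: nat \<Rightarrow> nat \<Rightarrow> nat \<Rightarrow> complex.
        (\<forall>j<s. \<forall>k<s. sum_mult_adj d s A A j k = (if j = k then 1 else 0)) \<and>
        (\<forall>j<s. \<forall>k<s. sum_mult_adj d s B B j k = (if j = k then 1 else 0)) \<and>
        (\<forall>j<s. \<forall>k<s. sum_mult_adj d s A B j k = 0) \<and>
        (\<forall>i<d. frob2 s (A i) / real s = a ! i \<and> frob2 s (B i) / real s = b ! i))}"

end

theory Submission
  imports Defs
begin

text \<open>For s = 1 the matrices are scalars x_i, y_i, and the conditions say that x and y are
  orthogonal in C^d with moduli |x_i|^2 = \<alpha>_i and |y_i|^2 = \<beta>_i. The products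
  z_i = x_i conj(y_i) are then the sides of a closed polygon in the plane with side lengths
  sqrt(\<alpha>_i \<beta>_i), and every such polygon factors back in this way. A closed polygon with
  prescribed side lengths exists iff no side is longer than the sum of the others: necessity is
  the triangle inequality; for sufficiency, split the sides other than a longest one into two
  groups whose total lengths differ by at most that longest side, so that the longest side and the
  two totals form a triangle, and lay out each group along one edge of it.\<close>

lemma ex_balanced_partition:
  fixes r :: "'a \<Rightarrow> real"
  assumes "finite S" "\<forall>j\<in>S. 0 \<le> r j \<and> r j \<le> R" "0 \<le> R"
  shows "\<exists>T\<subseteq>S. \<bar>sum r T - sum r (S - T)\<bar> \<le> R"
  using assms
proof (induction S rule: finite_induct)
  case empty
  then show ?case by simp
next
  case (insert x S)
  then obtain T where T: "T \<subseteq> S" "\<bar>sum r T - sum r (S - T)\<bar> \<le> R" by auto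
  have "finite T" "x \<notin> T" using T insert.hyps finite_subset by auto
  have "0 \<le> r x" "r x \<le> R" using insert.prems by auto
  \<comment> \<open>Greedily put x on the lighter side.\<close>
  show ?case
  proof (cases "sum r T \<ge> sum r (S - T)")
    case True
    have "sum r (insert x S - T) = r x + sum r (S - T)"
      using \<open>x \<notin> T\<close> insert.hyps by (simp add: insert_Diff_if)
    then show ?thesis using T True \<open>0 \<le> r x\<close> \<open>r x \<le> R\<close> by (intro exI[of _ T]) auto
  next
    case False
    have "insert x S - insert x T = S - T" using insert.hyps by auto
    moreover have "sum r (insert x T) = r x + sum r T" using \<open>finite T\<close> \<open>x \<notin> T\<close> by simp
    ultimately show ?thesis using T False \<open>0 \<le> r x\<close> \<open>r x \<le> R\<close>
      by (intro exI[of _ "insert x T"]) auto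
  qed
qed

lemma ex_complex_triangle:
  fixes a b c :: real
  assumes "0 \<le> b" "0 \<le> c" "\<bar>b - c\<bar> \<le> a" "a \<le> b + c"
  shows "\<exists>w1 w2. cmod w1 = b \<and> cmod w2 = c \<and> of_real a + w1 + w2 = 0"
proof (cases "a = 0")
  case True
  then show ?thesis using assms by (intro exI[of _ "of_real b"] exI[of _ "- of_real b"]) auto
next
  case False
  with assms have "a > 0" by linarith
  \<comment> \<open>w1 = p + iq with p forced by cmod w1 = b and cmod (a + w1) = c.\<close>
  define p where "p = (c\<^sup>2 - b\<^sup>2 - a\<^sup>2) / (2 * a)"
  have "(2 * a)\<^sup>2 * (b\<^sup>2 - p\<^sup>2) = ((a + b)\<^sup>2 - c\<^sup>2) * (c\<^sup>2 - (a - b)\<^sup>2)"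
    using \<open>a > 0\<close> by (simp add: p_def field_simps power2_eq_square)
  moreover have "\<bar>c\<bar> \<le> \<bar>a + b\<bar>" "\<bar>a - b\<bar> \<le> \<bar>c\<bar>"
    using assms by linarith+
  then have "c\<^sup>2 \<le> (a + b)\<^sup>2" "(a - b)\<^sup>2 \<le> c\<^sup>2"
    by (simp_all add: abs_le_square_iff)
  ultimately have "0 \<le> (2 * a)\<^sup>2 * (b\<^sup>2 - p\<^sup>2)"
    by simp
  then have "0 \<le> b\<^sup>2 - p\<^sup>2"
    using \<open>a > 0\<close> by (simp add: zero_le_mult_iff)
  define q where "q = sqrt (b\<^sup>2 - p\<^sup>2)"
  have q2: "q\<^sup>2 = b\<^sup>2 - p\<^sup>2" unfolding q_def using \<open>0 \<le> b\<^sup>2 - p\<^sup>2\<close> by simp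
  have "(- a - p)\<^sup>2 + q\<^sup>2 = c\<^sup>2"
    using q2 \<open>a > 0\<close> by (simp add: p_def field_simps power2_eq_square)
  then have "cmod (Complex (- a - p) (- q)) = c" "cmod (Complex p q) = b"
    using q2 assms by (simp_all add: cmod_def)
  then show ?thesis
    by (intro exI[of _ "Complex p q"] exI[of _ "Complex (- a - p) (- q)"]) (simp add: complex_eq_iff)
qed

lemma ex_summands_with_norms:
  fixes r :: "'a \<Rightarrow> real" and w :: "'b::real_normed_vector"
  assumes "finite T" "\<forall>j\<in>T. 0 \<le> r j" "norm w = sum r T"
  shows "\<exists>z. (\<forall>j\<in>T. norm (z j) = r j) \<and> sum z T = w"
proof (intro exI[of _ "\<lambda>j. r j *\<^sub>R sgn w"] conjI ballI)
  fix j assume "j \<in> T"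
  show "norm (r j *\<^sub>R sgn w) = r j"
  proof (cases "w = 0")
    case True
    then have "r j = 0"
      using assms \<open>j \<in> T\<close> sum_nonneg_eq_0_iff[of T r] by simp
    then show ?thesis by simp
  qed (use assms \<open>j \<in> T\<close> in \<open>simp add: norm_sgn\<close>)
next
  have "(\<Sum>j\<in>T. r j *\<^sub>R sgn w) = norm w *\<^sub>R sgn w"
    using assms(3) by (simp add: scaleR_sum_left)
  also have "\<dots> = w"
    by (cases "w = 0") (simp_all add: sgn_div_norm)
  finally show "(\<Sum>j\<in>T. r j *\<^sub>R sgn w) = w" .
qed

lemma norm_le_sum_norm_others_if_sum_eq_0:
  fixes z :: "'a \<Rightarrow> 'b::real_normed_vector"
  assumes "finite I" "sum z I = 0" "i \<in> I"
  shows "norm (z i) \<le> (\<Sum>j\<in>I - {i}. norm (z j))"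
proof -
  have "z i = - (\<Sum>j\<in>I - {i}. z j)"
    using assms by (simp add: sum.remove eq_neg_iff_add_eq_0)
  then show ?thesis by (metis norm_minus_cancel norm_sum)
qed

lemma ex_closed_polygon:
  fixes r :: "'a \<Rightarrow> real"
  assumes "finite I" "\<forall>i\<in>I. 0 \<le> r i" "\<forall>i\<in>I. r i \<le> sum r (I - {i})"
  shows "\<exists>z. (\<forall>i\<in>I. cmod (z i) = r i) \<and> sum z I = 0"
proof (cases "I = {}")
  case False
  have "Max (r ` I) \<in> r ` I"
    using \<open>finite I\<close> False by simp
  then obtain m where "m \<in> I" and "r m = Max (r ` I)"
    by auto
  then have m_max: "\<forall>i\<in>I. r i \<le> r m"
    using \<open>finite I\<close> by simp
  define S where "S = I - {m}"
  have "finite S" "\<forall>j\<in>S. 0 \<le> r j" using assms(1,2) by (simp_all add: S_def)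
  obtain T where "T \<subseteq> S" and T: "\<bar>sum r T - sum r (S - T)\<bar> \<le> r m"
    using ex_balanced_partition[OF \<open>finite S\<close>, of r "r m"] assms(2) m_max \<open>m \<in> I\<close>
    unfolding S_def by auto
  have "sum r S = sum r T + sum r (S - T)"
    using \<open>T \<subseteq> S\<close> \<open>finite S\<close> by (metis sum.subset_diff add.commute)
  moreover have "0 \<le> sum r T" "0 \<le> sum r (S - T)"
    using \<open>T \<subseteq> S\<close> \<open>\<forall>j\<in>S. 0 \<le> r j\<close> by (auto intro!: sum_nonneg)
  moreover have "r m \<le> sum r S" using assms(3) \<open>m \<in> I\<close> by (simp add: S_def)
  ultimately obtain w1 w2 where
    w: "cmod w1 = sum r T" "cmod w2 = sum r (S - T)" "of_real (r m) + w1 + w2 = 0"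
    using ex_complex_triangle[of "sum r T" "sum r (S - T)" "r m"] T by auto
  obtain z1 where z1: "\<forall>j\<in>T. cmod (z1 j) = r j" "sum z1 T = w1"
    using ex_summands_with_norms[OF finite_subset _ w(1)] \<open>T \<subseteq> S\<close> \<open>finite S\<close> \<open>\<forall>j\<in>S. 0 \<le> r j\<close>
    by blast
  obtain z2 where z2: "\<forall>j\<in>S - T. cmod (z2 j) = r j" "sum z2 (S - T) = w2"
    using ex_summands_with_norms[OF _ _ w(2)] \<open>finite S\<close> \<open>\<forall>j\<in>S. 0 \<le> r j\<close> by blast
  define z where "z i = (if i = m then of_real (r m) else if i \<in> T then z1 i else z2 i)" for i
  have "cmod (z i) = r i" if "i \<in> I" for i
    using that z1(1) z2(1) assms(2) \<open>m \<in> I\<close> by (simp add: z_def S_def)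
  moreover have "sum z I = 0"
  proof -
    have "sum z I = z m + sum z T + sum z (S - T)"
      using sum.remove[OF \<open>finite I\<close> \<open>m \<in> I\<close>, of z] sum.subset_diff[OF \<open>T \<subseteq> S\<close> \<open>finite S\<close>, of z]
      by (simp add: S_def ac_simps)
    also have "sum z T = sum z1 T"
      using \<open>T \<subseteq> S\<close> by (intro sum.cong) (auto simp: z_def S_def)
    also have "sum z (S - T) = sum z2 (S - T)"
      by (intro sum.cong) (auto simp: z_def S_def)
    finally show ?thesis using w(3) z1(2) z2(2) by (simp add: z_def)
  qed
  ultimately show ?thesis by blast
qed simp

lemma ex_closed_polygon_iff:
  fixes r :: "'a \<Rightarrow> real"
  assumes "finite I" "\<forall>i\<in>I. 0 \<le> r i"
  shows "(\<exists>z. (\<forall>i\<in>I. cmod (z i) = r i) \<and> sum z I = 0) \<longleftrightarrow> (\<forall>i\<in>I. r i \<le> sum r (I - {i}))"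
proof
  assume "\<exists>z. (\<forall>i\<in>I. cmod (z i) = r i) \<and> sum z I = 0"
  then obtain z where z: "\<forall>i\<in>I. cmod (z i) = r i" "sum z I = 0" by blast
  show "\<forall>i\<in>I. r i \<le> sum r (I - {i})"
  proof
    fix i assume "i \<in> I"
    then have "cmod (z i) \<le> (\<Sum>j\<in>I - {i}. cmod (z j))"
      using norm_le_sum_norm_others_if_sum_eq_0[OF \<open>finite I\<close> z(2)] by blast
    then show "r i \<le> sum r (I - {i})"
      using z(1) \<open>i \<in> I\<close> by simp
  qed
qed (use ex_closed_polygon[OF assms] in blast)

lemma ex_orthogonal_with_moduli_iff_ex_closed_polygon:
  fixes \<alpha> \<beta> :: "'a \<Rightarrow> real"
  assumes "\<forall>i\<in>I. 0 \<le> \<alpha> i \<and> 0 \<le> \<beta> i"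
  shows "(\<exists>x y. (\<forall>i\<in>I. (cmod (x i))\<^sup>2 = \<alpha> i \<and> (cmod (y i))\<^sup>2 = \<beta> i) \<and> (\<Sum>i\<in>I. x i * cnj (y i)) = 0)
    \<longleftrightarrow> (\<exists>z. (\<forall>i\<in>I. cmod (z i) = sqrt (\<alpha> i * \<beta> i)) \<and> sum z I = 0)"
proof
  assume "\<exists>x y. (\<forall>i\<in>I. (cmod (x i))\<^sup>2 = \<alpha> i \<and> (cmod (y i))\<^sup>2 = \<beta> i) \<and> (\<Sum>i\<in>I. x i * cnj (y i)) = 0"
  then obtain x y where xy: "\<forall>i\<in>I. (cmod (x i))\<^sup>2 = \<alpha> i \<and> (cmod (y i))\<^sup>2 = \<beta> i"
    and "(\<Sum>i\<in>I. x i * cnj (y i)) = 0" by blast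
  moreover have "cmod (x i * cnj (y i)) = sqrt (\<alpha> i * \<beta> i)" if "i \<in> I" for i
  proof -
    have "\<alpha> i = (cmod (x i))\<^sup>2" "\<beta> i = (cmod (y i))\<^sup>2" using xy that by auto
    then show ?thesis by (simp add: norm_mult real_sqrt_mult)
  qed
  ultimately show "\<exists>z. (\<forall>i\<in>I. cmod (z i) = sqrt (\<alpha> i * \<beta> i)) \<and> sum z I = 0"
    by (intro exI[of _ "\<lambda>i. x i * cnj (y i)"]) auto
next
  assume "\<exists>z. (\<forall>i\<in>I. cmod (z i) = sqrt (\<alpha> i * \<beta> i)) \<and> sum z I = 0"
  then obtain z where z: "\<forall>i\<in>I. cmod (z i) = sqrt (\<alpha> i * \<beta> i)" "sum z I = 0" by blast
  define u where "u i = (if z i = 0 then 1 else sgn (z i))" for i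
  define x where "x i = of_real (sqrt (\<alpha> i)) * u i" for i
  define y where "y i = complex_of_real (sqrt (\<beta> i))" for i
  have "cmod (u i) = 1" for i by (simp add: u_def norm_sgn)
  then have "\<forall>i\<in>I. (cmod (x i))\<^sup>2 = \<alpha> i \<and> (cmod (y i))\<^sup>2 = \<beta> i"
    using assms by (simp add: x_def y_def norm_mult)
  moreover have "x i * cnj (y i) = z i" if "i \<in> I" for i
  proof -
    have "x i * cnj (y i) = of_real (cmod (z i)) * u i"
      using z(1) that by (simp add: x_def y_def real_sqrt_mult)
    also have "\<dots> = z i" by (simp add: u_def sgn_eq)
    finally show ?thesis .
  qed
  ultimately show "\<exists>x y. (\<forall>i\<in>I. (cmod (x i))\<^sup>2 = \<alpha> i \<and> (cmod (y i))\<^sup>2 = \<beta> i) \<and> (\<Sum>i\<in>I. x i * cnj (y i)) = 0"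
    using z(2) by (metis (no_types, lifting) sum.cong)
qed

lemma Brac_gen_1_iff:
  "(a, b) \<in> Brac_gen d 1 \<longleftrightarrow> a \<in> simplex d \<and> b \<in> simplex d \<and>
     (\<exists>x y. (\<forall>i\<in>{..<d}. (cmod (x i))\<^sup>2 = a ! i \<and> (cmod (y i))\<^sup>2 = b ! i) \<and>
        (\<Sum>i<d. x i * cnj (y i)) = 0)"
  (is "_ \<longleftrightarrow> _ \<and> _ \<and> ?scalars")
proof -
  have sum_norm_square: "(\<Sum>i<d. x i * cnj (x i)) = 1"
    if "a' \<in> simplex d" "\<forall>i\<in>{..<d}. (cmod (x i))\<^sup>2 = a' ! i" for a' x
  proof -
    have "(\<Sum>i<d. x i * cnj (x i)) = (\<Sum>i<d. of_real (a' ! i))"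
      using that(2) by (intro sum.cong) (auto simp flip: complex_norm_square)
    then show ?thesis using that(1) by (simp add: simplex_def flip: of_real_sum)
  qed
  have all_less_one: "(\<forall>j<1. \<forall>k<1. P j k) \<longleftrightarrow> P 0 0" for P :: "nat \<Rightarrow> nat \<Rightarrow> bool"
    by simp
  have "(a, b) \<in> Brac_gen d 1 \<longleftrightarrow> a \<in> simplex d \<and> b \<in> simplex d \<and>
     (\<exists>(A :: nat \<Rightarrow> nat \<Rightarrow> nat \<Rightarrow> complex) (B :: nat \<Rightarrow> nat \<Rightarrow> nat \<Rightarrow> complex).
        (\<Sum>i<d. A i 0 0 * cnj (A i 0 0)) = 1 \<and> (\<Sum>i<d. B i 0 0 * cnj (B i 0 0)) = 1 \<and>
        (\<Sum>i<d. A i 0 0 * cnj (B i 0 0)) = 0 \<and>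
        (\<forall>i<d. (cmod (A i 0 0))\<^sup>2 = a ! i \<and> (cmod (B i 0 0))\<^sup>2 = b ! i))"
    (is "_ \<longleftrightarrow> _ \<and> _ \<and> ?matrices")
    unfolding Brac_gen_def all_less_one by (auto simp: sum_mult_adj_def frob2_def)
  also have "\<dots> \<longleftrightarrow> a \<in> simplex d \<and> b \<in> simplex d \<and> ?scalars"
  proof (intro conj_cong[OF refl] iffI)
    assume ?matrices
    then obtain A B :: "nat \<Rightarrow> nat \<Rightarrow> nat \<Rightarrow> complex" where
      "(\<Sum>i<d. A i 0 0 * cnj (B i 0 0)) = 0"
      "\<forall>i<d. (cmod (A i 0 0))\<^sup>2 = a ! i \<and> (cmod (B i 0 0))\<^sup>2 = b ! i"
      by blast
    then show ?scalars
      by (intro exI[of _ "\<lambda>i. A i 0 0"] exI[of _ "\<lambda>i. B i 0 0"]) simp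
  next
    assume "a \<in> simplex d" "b \<in> simplex d" ?scalars
    then obtain x y where xy: "\<forall>i\<in>{..<d}. (cmod (x i))\<^sup>2 = a ! i \<and> (cmod (y i))\<^sup>2 = b ! i"
      "(\<Sum>i<d. x i * cnj (y i)) = 0"
      by blast
    then show ?matrices
      using sum_norm_square[of a x] sum_norm_square[of b y] \<open>a \<in> simplex d\<close> \<open>b \<in> simplex d\<close>
      by (intro exI[of _ "\<lambda>i j k. x i"] exI[of _ "\<lambda>i j k. y i"]) simp
  qed
  finally show ?thesis .
qed

theorem proposition3p4:
  fixes d :: nat
  assumes "d \<ge> 2"
  shows "Brac_gen d 1 = Brac d"
proof (intro set_eqI)
  fix p :: "real list \<times> real list"
  obtain a b where p: "p = (a, b)" by fastforce
  show "p \<in> Brac_gen d 1 \<longleftrightarrow> p \<in> Brac d"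
  proof (cases "a \<in> simplex d \<and> b \<in> simplex d")
    case True
    then have nonneg: "\<forall>i\<in>{..<d}. 0 \<le> a ! i \<and> 0 \<le> b ! i"
      by (simp add: simplex_def)
    show ?thesis
      using ex_orthogonal_with_moduli_iff_ex_closed_polygon[OF nonneg]
        ex_closed_polygon_iff[of "{..<d}" "\<lambda>i. sqrt (a ! i * b ! i)"] nonneg True
      unfolding p Brac_gen_1_iff Brac_def by (simp add: Ball_def)
  qed (unfold p Brac_gen_1_iff Brac_def, auto)
qed

end
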